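(* Let $\mathbb{X}$ be a Cartesian left additive category with a combinator $\mathsf{D}$ sending each $f:A\to B$ to $\mathsf{D}[f]:A\times A\to B$, satisfying [CD.3]: $\mathsf{D}[1]=\pi_1$ and $\mathsf{D}[\pi_j]=\pi_1\pi_j$ ($j\in\{0,1\}$), and [CD.5]: $\mathsf{D}[fg]=\langle\pi_0f,\mathsf{D}[f]\rangle\mathsf{D}[g]$. Then [CD.4] holds: $\mathsf{D}[\langle f,g\rangle]=\langle\mathsf{D}[f],\mathsf{D}[g]\rangle$ for all $f:C\to A$, $g:C\to B$.
   Context: Composition in diagrammatic order. A Cartesian left additive category: a category with finite products whose hom-sets are commutative monoids with $f(g+h)=fg+fh$, $f0=0$, and whose projections are additive. In [CD.3], $\pi_j:A_0\times A_1\to A_j$ and $\pi_1:(A_0\times A_1)\times(A_0\times A_1)\to A_0\times A_1$. *)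

theory Defs
  imports Main
begin

text \<open>Composition is written in diagrammatic order: comp f g is "f then g",
defined when cod f = dom g.\<close>

locale cartesian_left_additive_category =
  fixes dom :: "'a \<Rightarrow> 'o" and cod :: "'a \<Rightarrow> 'o"
    and comp :: "'a \<Rightarrow> 'a \<Rightarrow> 'a"
    and idn :: "'o \<Rightarrow> 'a"
    and trm :: "'o" and bang :: "'o \<Rightarrow> 'a"
    and prd :: "'o \<Rightarrow> 'o \<Rightarrow> 'o"
    and p0 :: "'o \<Rightarrow> 'o \<Rightarrow> 'a" and p1 :: "'o \<Rightarrow> 'o \<Rightarrow> 'a"
    and pair :: "'a \<Rightarrow> 'a \<Rightarrow> 'a"
    and zero :: "'o \<Rightarrow> 'o \<Rightarrow> 'a" and plus :: "'a \<Rightarrow> 'a \<Rightarrow> 'a"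
  assumes dom_idn: "dom (idn A) = A" and cod_idn: "cod (idn A) = A"
    and dom_comp: "cod f = dom g \<Longrightarrow> dom (comp f g) = dom f"
    and cod_comp: "cod f = dom g \<Longrightarrow> cod (comp f g) = cod g"
    and comp_assoc: "cod f = dom g \<Longrightarrow> cod g = dom h \<Longrightarrow>
                     comp (comp f g) h = comp f (comp g h)"
    and idn_left: "comp (idn (dom f)) f = f"
    and idn_right: "comp f (idn (cod f)) = f"
    and dom_bang: "dom (bang A) = A" and cod_bang: "cod (bang A) = trm"
    and bang_unique: "dom f = A \<Longrightarrow> cod f = trm \<Longrightarrow> f = bang A"
    and dom_p0: "dom (p0 A B) = prd A B" and cod_p0: "cod (p0 A B) = A"
    and dom_p1: "dom (p1 A B) = prd A B" and cod_p1: "cod (p1 A B) = B"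
    and dom_pair: "dom f = dom g \<Longrightarrow> dom (pair f g) = dom f"
    and cod_pair: "dom f = dom g \<Longrightarrow> cod (pair f g) = prd (cod f) (cod g)"
    and pair_p0: "dom f = dom g \<Longrightarrow> comp (pair f g) (p0 (cod f) (cod g)) = f"
    and pair_p1: "dom f = dom g \<Longrightarrow> comp (pair f g) (p1 (cod f) (cod g)) = g"
    and pair_eta: "cod h = prd A B \<Longrightarrow> pair (comp h (p0 A B)) (comp h (p1 A B)) = h"
    and dom_zero: "dom (zero A B) = A" and cod_zero: "cod (zero A B) = B"
    and dom_plus: "dom f = dom g \<Longrightarrow> cod f = cod g \<Longrightarrow> dom (plus f g) = dom f"
    and cod_plus: "dom f = dom g \<Longrightarrow> cod f = cod g \<Longrightarrow> cod (plus f g) = cod f"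
    and plus_assoc: "dom f = dom g \<Longrightarrow> cod f = cod g \<Longrightarrow> dom g = dom h \<Longrightarrow> cod g = cod h \<Longrightarrow>
                     plus (plus f g) h = plus f (plus g h)"
    and plus_comm: "dom f = dom g \<Longrightarrow> cod f = cod g \<Longrightarrow> plus f g = plus g f"
    and plus_zero: "plus f (zero (dom f) (cod f)) = f"
    and comp_plus: "cod f = dom g \<Longrightarrow> dom g = dom h \<Longrightarrow> cod g = cod h \<Longrightarrow>
                    comp f (plus g h) = plus (comp f g) (comp f h)"
    and comp_zero: "cod f = A \<Longrightarrow> comp f (zero A B) = zero (dom f) B"
    and p0_additive: "dom f = dom g \<Longrightarrow> cod f = prd A B \<Longrightarrow> cod g = prd A B \<Longrightarrow>
                      comp (plus f g) (p0 A B) = plus (comp f (p0 A B)) (comp g (p0 A B))"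
    and p1_additive: "dom f = dom g \<Longrightarrow> cod f = prd A B \<Longrightarrow> cod g = prd A B \<Longrightarrow>
                      comp (plus f g) (p1 A B) = plus (comp f (p1 A B)) (comp g (p1 A B))"
    and p0_zero: "comp (zero C (prd A B)) (p0 A B) = zero C A"
    and p1_zero: "comp (zero C (prd A B)) (p1 A B) = zero C B"

end

theory Submission
  imports Defs
begin

(* The projections are linear in the sense that D[\<pi>] = \<pi>1 \<pi>, and by the chain rule [CD.5]
   postcomposition with a linear map commutes with D. Hence D[<f,g>] \<pi>j = D[<f,g> \<pi>j], which is
   D[f] resp. D[g], and the universal property of the product gives [CD.4]. *)

locale chain_rule_combinator = cartesian_left_additive_category +
  fixes D :: "'a \<Rightarrow> 'a"
  assumes dom_D: "dom (D f) = prd (dom f) (dom f)"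
    and cod_D: "cod (D f) = cod f"
    and D_comp: "cod f = dom g \<Longrightarrow>
                 D (comp f g) = comp (pair (comp (p0 (dom f) (dom f)) f) (D f)) (D g)"
begin

lemma D_comp_linear:
  assumes hk: "cod h = dom k"
    and linear: "D k = comp (p1 (dom k) (dom k)) k"
  shows "D (comp h k) = comp (D h) k"
proof -
  let ?X = "comp (p0 (dom h) (dom h)) h"
  have dom_X: "dom ?X = dom (D h)" and cod_X: "cod ?X = cod (D h)"
    by (simp_all add: dom_comp cod_comp dom_p0 cod_p0 dom_D cod_D)
  have cod_pair_X: "cod (pair ?X (D h)) = prd (dom k) (dom k)"
    using dom_X cod_X hk by (simp add: cod_pair cod_D)
  have "D (comp h k) = comp (pair ?X (D h)) (comp (p1 (dom k) (dom k)) k)"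
    using D_comp[OF hk] linear by simp
  also have "\<dots> = comp (comp (pair ?X (D h)) (p1 (dom k) (dom k))) k"
    using cod_pair_X by (simp add: comp_assoc dom_p1 cod_p1)
  also have "\<dots> = comp (D h) k"
    using pair_p1[OF dom_X] cod_X hk by (simp add: cod_D)
  finally show ?thesis .
qed

lemma D_pair:
  assumes D_p0: "D (p0 A B) = comp (p1 (prd A B) (prd A B)) (p0 A B)"
    and D_p1: "D (p1 A B) = comp (p1 (prd A B) (prd A B)) (p1 A B)"
    and fg: "dom f = dom g" "cod f = A" "cod g = B"
  shows "D (pair f g) = pair (D f) (D g)"
proof -
  let ?h = "pair f g"
  have cod_h: "cod ?h = prd A B"
    using fg by (simp add: cod_pair)
  have "D f = D (comp ?h (p0 A B))"
    using pair_p0[of f g] fg by simp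
  also have "\<dots> = comp (D ?h) (p0 A B)"
    using D_comp_linear cod_h D_p0 by (simp add: dom_p0)
  finally have D_f: "D f = comp (D ?h) (p0 A B)" .
  have "D g = D (comp ?h (p1 A B))"
    using pair_p1[of f g] fg by simp
  also have "\<dots> = comp (D ?h) (p1 A B)"
    using D_comp_linear cod_h D_p1 by (simp add: dom_p1)
  finally have D_g: "D g = comp (D ?h) (p1 A B)" .
  show ?thesis
    using pair_eta[of "D ?h"] cod_h by (simp add: D_f D_g cod_D)
qed

end

theorem lemma2p6:
  fixes dom :: "'a \<Rightarrow> 'o" and cod :: "'a \<Rightarrow> 'o"
    and comp :: "'a \<Rightarrow> 'a \<Rightarrow> 'a"
    and idn :: "'o \<Rightarrow> 'a"
    and trm :: "'o" and bang :: "'o \<Rightarrow> 'a"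
    and prd :: "'o \<Rightarrow> 'o \<Rightarrow> 'o"
    and p0 :: "'o \<Rightarrow> 'o \<Rightarrow> 'a" and p1 :: "'o \<Rightarrow> 'o \<Rightarrow> 'a"
    and pair :: "'a \<Rightarrow> 'a \<Rightarrow> 'a"
    and zero :: "'o \<Rightarrow> 'o \<Rightarrow> 'a" and plus :: "'a \<Rightarrow> 'a \<Rightarrow> 'a"
    and D :: "'a \<Rightarrow> 'a"
  assumes CLAC: "cartesian_left_additive_category dom cod comp idn trm bang prd p0 p1 pair zero plus"
    and D_type: "\<And>f. dom (D f) = prd (dom f) (dom f) \<and> cod (D f) = cod f"
    and CD3_id: "\<And>A. D (idn A) = p1 A A"
    and CD3_p0: "\<And>A B. D (p0 A B) = comp (p1 (prd A B) (prd A B)) (p0 A B)"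
    and CD3_p1: "\<And>A B. D (p1 A B) = comp (p1 (prd A B) (prd A B)) (p1 A B)"
    and CD5: "\<And>f g. cod f = dom g \<Longrightarrow>
               D (comp f g) = comp (pair (comp (p0 (dom f) (dom f)) f) (D f)) (D g)"
    and fg: "dom f = C" "cod f = A" "dom g = C" "cod g = B"
  shows "D (pair f g) = pair (D f) (D g)"
proof -
  interpret chain_rule_combinator dom cod comp idn trm bang prd p0 p1 pair zero plus D
    using CLAC D_type CD5 by (simp add: chain_rule_combinator_def chain_rule_combinator_axioms_def)
  show ?thesis
    using D_pair[OF CD3_p0 CD3_p1] fg by simp
qed

end
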